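(* Let $k>0$ be an integer and let $a_0,a_1,\ldots,a_k$ be fixed integers with $a_j\neq 0$ for at least one $j\in\{1,\ldots,k\}$. For $n>k$ let $P_{2n}(x)=x^n\big(x^n+a_0+x^{-n}+\sum_{j=1}^k a_j(x^j+x^{-j})\big)$ and let $f_2(t)=-\frac{a_0}{2}-\sum_{j=1}^k a_j\cos(jt)$. Then $$\lim_{n\to\infty} C(P_{2n})=\frac{1}{2\pi}\,\lambda\big(\{t\in[0,2\pi]: |f_2(t)|\ge 1\}\big),$$ where $\lambda$ denotes Lebesgue measure. Equivalently, if $0=t_0<t_1<\cdots<t_p=2\pi$ are $0$, $2\pi$ and all solutions in $(0,2\pi)$ of $f_2(t)=\pm1$, and $J$ is the set of indices $j$ with $|f_2(t)|<1$ on $(t_{j-1},t_j)$, then $\lim_{n\to\infty}C(P_{2n})=1-\sum_{j\in J}\frac{t_j-t_{j-1}}{2\pi}$.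
   Context: For a polynomial $P$ of degree $d$, let $I(P)$, $U(P)$, $E(P)$ denote the numbers of complex zeros of $P$ (counted with multiplicity) of modulus $<1$, $=1$, $>1$ respectively. For the degree-$2n$ polynomial $P_{2n}$, $C(P_{2n})=\frac{I(P_{2n})+E(P_{2n})}{2n}$. *)

theory Defs
  imports "HOL-Analysis.Analysis" "HOL-Computational_Algebra.Polynomial"
begin

definition zeros_inside :: "complex poly \<Rightarrow> nat" where
  "zeros_inside p = size (filter_mset (\<lambda>z. cmod z < 1) (proots p))"

definition zeros_on :: "complex poly \<Rightarrow> nat" where
  "zeros_on p = size (filter_mset (\<lambda>z. cmod z = 1) (proots p))"

definition zeros_outside :: "complex poly \<Rightarrow> nat" where
  "zeros_outside p = size (filter_mset (\<lambda>z. cmod z > 1) (proots p))"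

text \<open>P_{2n}(x) = x^{2n} + a_0 x^n + 1 + sum_{j=1}^k a_j (x^{n+j} + x^{n-j});
  this is the intended polynomial for n > k (for n <= k the truncated
  subtraction gives some irrelevant polynomial).\<close>
definition P2n :: "nat \<Rightarrow> (nat \<Rightarrow> int) \<Rightarrow> nat \<Rightarrow> complex poly" where
  "P2n k a n = monom 1 (2*n) + monom (of_int (a 0)) n + 1
     + (\<Sum>j\<in>{1..k}. monom (of_int (a j)) (n + j) + monom (of_int (a j)) (n - j))"

definition f2 :: "nat \<Rightarrow> (nat \<Rightarrow> int) \<Rightarrow> real \<Rightarrow> real" where
  "f2 k a t = - real_of_int (a 0) / 2 - (\<Sum>j\<in>{1..k}. real_of_int (a j) * cos (real j * t))"

definition Cratio :: "nat \<Rightarrow> complex poly \<Rightarrow> real" where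
  "Cratio n p = real (zeros_inside p + zeros_outside p) / real (2*n)"

end

theory Submission
  imports Defs "HOL-Computational_Algebra.Fundamental_Theorem_Algebra"
begin

text \<open>
  On the unit circle P2n(e^(it)) = 2 e^(int) (cos(nt) - f2(t)), so the unimodular zeros of P2n are the
  solutions t \<in> [0, 2\<pi>) of cos(nt) = f2(t), and since I + U + E = 2n it suffices to show that
  U/(2n) tends to \<lambda>{|f2| < 1}/(2\<pi>).

  Where |f2| > 1 there are no solutions. Where |f2| < 1, the intermediate value theorem gives a
  solution between any two consecutive extrema of cos(nt), so about n/\<pi> solutions per unit length.
  Conversely, for large n the derivative of cos(nt) - f2(t) vanishes only where cos(nt)^2 > 3/4,
  and its second derivative only where cos(nt)^2 \<le> 3/4; by Rolle's theorem the derivative then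
  vanishes at most once between consecutive zeros of cos(nt), which again bounds the number of
  solutions by about n/\<pi> per unit length. The same estimates, applied to the Euler operator
  z d/dz, show that all these roots have multiplicity at most 2, and are simple where
  |f2| \<le> 1 - \<eta>.

  Splitting [0, 2\<pi>] into N cells, only cells meeting the finite set {|f2| = 1} are of mixed type,
  at most two per point, so letting first n and then N tend to infinity gives the limit.
\<close>

section \<open>Multiple roots and the Euler operator\<close>

definition euler_op :: "'a::idom poly \<Rightarrow> 'a poly" where
  "euler_op p = monom 1 1 * pderiv p"

lemma poly_euler_op [simp]: "poly (euler_op p) x = x * poly (pderiv p) x"
  by (simp add: euler_op_def poly_monom)

lemma euler_op_add: "euler_op (p + q) = euler_op p + euler_op q"
  by (simp add: euler_op_def pderiv_add distrib_left)

lemma euler_op_sum: "euler_op (\<Sum>x\<in>A. f x) = (\<Sum>x\<in>A. euler_op (f x))"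
  using higher_pderiv_sum[of 1 f A] by (simp add: euler_op_def sum_distrib_left)

lemma euler_op_monom: "euler_op (monom c m) = monom (of_nat m * c) m"
  by (cases m) (simp_all add: euler_op_def pderiv_monom mult_monom)

lemma poly_pderiv_eq_0_if_order_ge_2:
  fixes p :: "'a::{idom,semiring_char_0} poly"
  assumes "p \<noteq> 0" "order z p \<ge> 2"
  shows "poly (pderiv p) z = 0"
proof -
  have "poly p z = 0" using assms order_root by fastforce
  then have "order z (pderiv p) \<noteq> 0" using order_pderiv[OF assms(1)] assms(2) by simp
  then show ?thesis using order_root by blast
qed

lemma poly_euler_op_eq_0_if_order_ge_2:
  fixes p :: "'a::{idom,semiring_char_0} poly"
  assumes "p \<noteq> 0" "order z p \<ge> 2"
  shows "poly (euler_op p) z = 0"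
  using poly_pderiv_eq_0_if_order_ge_2[OF assms] by simp

lemma poly_euler_op2_eq_0_if_order_ge_3:
  fixes p :: "'a::{idom,semiring_char_0} poly"
  assumes "p \<noteq> 0" "order z p \<ge> 3"
  shows "poly (euler_op (euler_op p)) z = 0"
proof -
  have root: "poly p z = 0" using assms order_root by fastforce
  have "order z (pderiv p) \<ge> 2" using order_pderiv[OF assms(1) root] assms(2) by simp
  then have "poly (pderiv (pderiv p)) z = 0"
    using poly_pderiv_eq_0_if_order_ge_2[of "pderiv p"] by (cases "pderiv p = 0") auto
  moreover have "poly (pderiv p) z = 0" using poly_pderiv_eq_0_if_order_ge_2 assms by force
  ultimately show ?thesis by (simp add: euler_op_def pderiv_mult pderiv_monom poly_monom)
qed

section \<open>Roots on the unit circle\<close>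

lemma poly_symmetric_block_cis:
  assumes "\<forall>j\<in>J. j \<le> m"
  shows "poly (\<Sum>j\<in>J. monom (b j) (m + j) + monom (c j) (m - j)) (cis t)
       = cis (real m * t) * (\<Sum>j\<in>J. b j * cis (real j * t) + c j * cis (- (real j * t)))"
proof -
  have "cis t ^ (m + j) = cis (real m * t) * cis (real j * t)"
    and "cis t ^ (m - j) = cis (real m * t) * cis (- (real j * t))" if "j \<in> J" for j
    using assms that by (simp_all add: Complex.DeMoivre cis_mult of_nat_diff algebra_simps)
  then show ?thesis
    by (simp add: poly_sum poly_monom sum_distrib_left algebra_simps cong: sum.cong)
qed

lemma zeros_inside_outside_on_sum:
  "zeros_inside p + zeros_outside p + zeros_on p = degree p"
proof -
  have "size (proots p) = zeros_inside p + size (filter_mset (\<lambda>z. \<not> cmod z < 1) (proots p))"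
    unfolding zeros_inside_def by (metis multiset_partition size_union)
  also have "filter_mset (\<lambda>z. \<not> cmod z < 1) M
      = filter_mset (\<lambda>z. cmod z > 1) M + filter_mset (\<lambda>z. cmod z = 1) M" for M :: "complex multiset"
    by (induction M) auto
  then have "size (filter_mset (\<lambda>z. \<not> cmod z < 1) (proots p)) = zeros_outside p + zeros_on p"
    unfolding zeros_outside_def zeros_on_def by simp
  finally show ?thesis by (simp add: size_proots_complex)
qed

lemma bij_betw_cis: "bij_betw cis {0..<2*pi} (sphere 0 1)"
proof (rule bij_betw_imageI)
  show "inj_on cis {0..<2*pi}"
  proof (rule inj_onI)
    fix s t assume "s \<in> {0..<2*pi}" "t \<in> {0..<2*pi}" "cis s = cis t"
    then have "Arg2pi (cis t) = s" "Arg2pi (cis t) = t"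
      by (auto intro!: Arg2pi_unique[of 1] simp: cis_conv_exp)
    then show "s = t" by simp
  qed
  show "cis ` {0..<2*pi} = sphere 0 1"
  proof
    show "sphere 0 1 \<subseteq> cis ` {0..<2*pi}"
    proof
      fix z :: complex assume "z \<in> sphere 0 1"
      then have "z = cis (Arg2pi z)" "Arg2pi z \<in> {0..<2*pi}"
        using Arg2pi[of z] by (auto simp: is_Arg_def cis_conv_exp)
      then show "z \<in> cis ` {0..<2*pi}" by blast
    qed
  qed auto
qed

text \<open>Roots of p on the arc cis ` A, counted with multiplicity; this is the intended count only
  when A \<subseteq> [0, 2\<pi>), where cis is injective.\<close>

definition arc_root_count :: "complex poly \<Rightarrow> real set \<Rightarrow> nat" where
  "arc_root_count p A = (\<Sum>t\<in>{t\<in>A. poly p (cis t) = 0}. order (cis t) p)"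

lemma finite_arc_roots:
  assumes "p \<noteq> 0" "A \<subseteq> {0..<2*pi}"
  shows "finite {t\<in>A. poly p (cis t) = 0}"
proof (rule finite_imageD)
  show "finite (cis ` {t\<in>A. poly p (cis t) = 0})"
    by (rule finite_subset[OF _ poly_roots_finite[OF assms(1)]]) auto
  show "inj_on cis {t\<in>A. poly p (cis t) = 0}"
    by (rule inj_on_subset[OF bij_betw_imp_inj_on[OF bij_betw_cis]]) (use assms(2) in auto)
qed

lemma zeros_on_eq_arc_root_count:
  assumes "p \<noteq> 0"
  shows "zeros_on p = arc_root_count p {0..<2*pi}"
proof -
  define S where "S = {t\<in>{0..<2*pi}. poly p (cis t) = 0}"
  have inj: "inj_on cis S"
    unfolding S_def by (rule inj_on_subset[OF bij_betw_imp_inj_on[OF bij_betw_cis]]) auto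
  have roots: "{z\<in>set_mset (proots p). cmod z = 1} = cis ` S"
  proof (intro equalityI subsetI)
    fix z assume "z \<in> {z\<in>set_mset (proots p). cmod z = 1}"
    moreover obtain t where "t \<in> {0..<2*pi}" "z = cis t" if "cmod z = 1"
      using bij_betw_imp_surj_on[OF bij_betw_cis] by (metis dist_0_norm imageE mem_sphere)
    ultimately show "z \<in> cis ` S" using assms unfolding S_def by auto
  qed (use assms in \<open>auto simp: S_def\<close>)
  have "zeros_on p = sum (count (proots p)) {z\<in>set_mset (proots p). cmod z = 1}"
    unfolding zeros_on_def by (subst size_multiset_overloaded_eq) (auto intro!: sum.cong)
  also have "\<dots> = (\<Sum>t\<in>S. count (proots p) (cis t))"
    unfolding roots by (rule sum.reindex[OF inj, unfolded comp_def])
  finally show ?thesis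
    unfolding arc_root_count_def S_def[symmetric] using assms by simp
qed

lemma arc_root_count_Un:
  assumes "p \<noteq> 0" "A \<union> B \<subseteq> {0..<2*pi}" "A \<inter> B = {}"
  shows "arc_root_count p (A \<union> B) = arc_root_count p A + arc_root_count p B"
proof -
  have "{t\<in>A \<union> B. poly p (cis t) = 0} = {t\<in>A. poly p (cis t) = 0} \<union> {t\<in>B. poly p (cis t) = 0}"
    by auto
  then show ?thesis
    unfolding arc_root_count_def using assms finite_arc_roots[OF assms(1)]
    by (simp add: sum.union_disjoint disjoint_iff)
qed

lemma arc_root_count_le_card:
  assumes "\<forall>t\<in>A. order (cis t) p \<le> m"
  shows "arc_root_count p A \<le> m * card {t\<in>A. poly p (cis t) = 0}"
proof -
  have "arc_root_count p A \<le> of_nat (card {t\<in>A. poly p (cis t) = 0}) * m"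
    unfolding arc_root_count_def by (rule sum_bounded_above) (use assms in auto)
  then show ?thesis by (simp add: mult.commute)
qed

lemma card_le_arc_root_count:
  assumes "p \<noteq> 0"
  shows "card {t\<in>A. poly p (cis t) = 0} \<le> arc_root_count p A"
proof -
  have "order (cis t) p \<ge> 1" if "poly p (cis t) = 0" for t
    using that assms order_root[of p "cis t"] by simp
  then have "of_nat (card {t\<in>A. poly p (cis t) = 0}) * 1 \<le> arc_root_count p A"
    unfolding arc_root_count_def by (intro sum_bounded_below) auto
  then show ?thesis by simp
qed

definition grid :: "nat \<Rightarrow> nat \<Rightarrow> real" where
  "grid N i = real i * (2*pi / real N)"

lemma grid_nonneg: "0 \<le> grid N i"
  by (simp add: grid_def)

lemma grid_mono: "i \<le> j \<Longrightarrow> grid N i \<le> grid N j"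
  unfolding grid_def by (intro mult_right_mono) auto

lemma grid_le_2pi: "i \<le> N \<Longrightarrow> grid N i \<le> 2*pi"
  using grid_mono[of i N N] by (cases "N = 0") (auto simp: grid_def)

lemma grid_Suc_diff: "grid N (Suc i) - grid N i = 2*pi / real N"
  by (simp add: grid_def algebra_simps add_divide_distrib)

lemma arc_root_count_grid:
  assumes "p \<noteq> 0" "N \<ge> 1"
  shows "arc_root_count p {0..<2*pi} = (\<Sum>i<N. arc_root_count p {grid N i..<grid N (Suc i)})"
proof -
  have "arc_root_count p {0..<grid N m} = (\<Sum>i<m. arc_root_count p {grid N i..<grid N (Suc i)})"
    if "m \<le> N" for m
    using that
  proof (induction m)
    case (Suc m)
    have mono: "0 \<le> grid N m" "grid N m \<le> grid N (Suc m)" "grid N (Suc m) \<le> 2*pi"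
      using Suc.prems by (simp_all add: grid_nonneg grid_mono grid_le_2pi)
    then have "{0..<grid N (Suc m)} = {0..<grid N m} \<union> {grid N m..<grid N (Suc m)}"
      "{0..<grid N m} \<inter> {grid N m..<grid N (Suc m)} = {}"
      by auto
    moreover have "{0..<grid N m} \<union> {grid N m..<grid N (Suc m)} \<subseteq> {0..<2*pi}"
      using mono by auto
    ultimately show ?case
      using Suc arc_root_count_Un[OF assms(1)] by simp
  qed (simp add: grid_def arc_root_count_def)
  from this[of N] show ?thesis using assms(2) by (simp add: grid_def)
qed

section \<open>The trigonometric polynomial \<open>f2\<close>\<close>

definition f2' :: "nat \<Rightarrow> (nat \<Rightarrow> int) \<Rightarrow> real \<Rightarrow> real" where
  "f2' k a t = (\<Sum>j\<in>{1..k}. real j * real_of_int (a j) * sin (real j * t))"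

definition f2'' :: "nat \<Rightarrow> (nat \<Rightarrow> int) \<Rightarrow> real \<Rightarrow> real" where
  "f2'' k a t = (\<Sum>j\<in>{1..k}. (real j)\<^sup>2 * real_of_int (a j) * cos (real j * t))"

lemma has_real_derivative_f2: "(f2 k a has_real_derivative f2' k a t) (at t)"
  unfolding f2_def[abs_def] f2'_def
  by (auto intro!: derivative_eq_intros simp: algebra_simps sum_negf)

lemma has_real_derivative_f2': "(f2' k a has_real_derivative f2'' k a t) (at t)"
  unfolding f2'_def[abs_def] f2''_def
  by (auto intro!: derivative_eq_intros simp: algebra_simps power2_eq_square)

lemma continuous_on_f2: "continuous_on S (f2 k a)"
  unfolding f2_def[abs_def] by (intro continuous_intros)

definition coeff_moment :: "nat \<Rightarrow> (nat \<Rightarrow> int) \<Rightarrow> nat \<Rightarrow> real" where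
  "coeff_moment k a r = (\<Sum>j\<in>{1..k}. real j ^ r * \<bar>real_of_int (a j)\<bar>)"

lemma coeff_moment_nonneg: "coeff_moment k a r \<ge> 0"
  unfolding coeff_moment_def by (intro sum_nonneg) auto

lemma abs_weighted_trig_sum_le:
  assumes "\<And>x. \<bar>\<phi> x\<bar> \<le> 1"
  shows "\<bar>\<Sum>j\<in>{1..k}. real j ^ r * real_of_int (a j) * \<phi> (real j * t)\<bar> \<le> coeff_moment k a r"
proof -
  have "\<bar>\<Sum>j\<in>{1..k}. real j ^ r * real_of_int (a j) * \<phi> (real j * t)\<bar>
      \<le> (\<Sum>j\<in>{1..k}. real j ^ r * \<bar>real_of_int (a j)\<bar> * \<bar>\<phi> (real j * t)\<bar>)"
    by (rule order_trans[OF sum_abs]) (simp add: abs_mult)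
  also have "\<dots> \<le> coeff_moment k a r"
    unfolding coeff_moment_def by (intro sum_mono mult_left_le assms) auto
  finally show ?thesis .
qed

lemma abs_f2'_le: "\<bar>f2' k a t\<bar> \<le> coeff_moment k a 1"
  using abs_weighted_trig_sum_le[of sin 1] by (simp add: f2'_def)

lemma abs_f2''_le: "\<bar>f2'' k a t\<bar> \<le> coeff_moment k a 2"
  using abs_weighted_trig_sum_le[of cos 2] by (simp add: f2''_def)

definition f2_level_poly :: "nat \<Rightarrow> (nat \<Rightarrow> int) \<Rightarrow> real \<Rightarrow> complex poly" where
  "f2_level_poly k a c = monom (complex_of_real (2*c) + of_int (a 0)) k
     + (\<Sum>j\<in>{1..k}. monom (of_int (a j)) (k + j) + monom (of_int (a j)) (k - j))"

lemma poly_f2_level_poly_cis: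
  "poly (f2_level_poly k a c) (cis t) = 2 * cis (real k * t) * complex_of_real (c - f2 k a t)"
proof -
  have "poly (f2_level_poly k a c) (cis t) = cis (real k * t) * (complex_of_real (2*c) + of_int (a 0)
      + (\<Sum>j\<in>{1..k}. of_int (a j) * cis (real j * t) + of_int (a j) * cis (- (real j * t))))"
    unfolding f2_level_poly_def poly_add
    by (subst poly_symmetric_block_cis) (auto simp: poly_monom Complex.DeMoivre algebra_simps)
  also have "complex_of_real (2*c) + of_int (a 0)
      + (\<Sum>j\<in>{1..k}. of_int (a j) * cis (real j * t) + of_int (a j) * cis (- (real j * t)))
      = 2 * complex_of_real (c - f2 k a t)"
    by (simp add: complex_eq_iff f2_def Re_sum Im_sum sum_distrib_left algebra_simps)
  finally show ?thesis by simp
qed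

lemma f2_level_poly_nonzero:
  assumes "j0 \<in> {1..k}" "a j0 \<noteq> 0"
  shows "f2_level_poly k a c \<noteq> 0"
proof -
  have "(\<Sum>j\<in>{1..k}. coeff (monom (of_int (a j)) (k + j)) (k + j0)
      + coeff (monom (of_int (a j)) (k - j)) (k + j0)) = (\<Sum>j\<in>{1..k}. if j = j0 then of_int (a j0) else 0)"
    using assms(1) by (intro sum.cong) (auto simp: coeff_monom)
  then have "coeff (f2_level_poly k a c) (k + j0) = of_int (a j0)"
    using assms(1) by (simp add: f2_level_poly_def coeff_sum coeff_monom)
  then show ?thesis using assms(2) by auto
qed

lemma finite_level_set_f2:
  assumes "\<exists>j\<in>{1..k}. a j \<noteq> 0"
  shows "finite {t\<in>{0..<2*pi}. f2 k a t = c}"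
proof -
  obtain j0 where "j0 \<in> {1..k}" "a j0 \<noteq> 0" using assms by blast
  then have "finite {t\<in>{0..<2*pi}. poly (f2_level_poly k a c) (cis t) = 0}"
    using f2_level_poly_nonzero by (intro finite_arc_roots) auto
  moreover have "{t\<in>{0..<2*pi}. poly (f2_level_poly k a c) (cis t) = 0} = {t\<in>{0..<2*pi}. f2 k a t = c}"
    by (auto simp: poly_f2_level_poly_cis)
  ultimately show ?thesis by simp
qed

lemma finite_unit_level_set_f2:
  assumes "\<exists>j\<in>{1..k}. a j \<noteq> 0"
  shows "finite {u\<in>{0..2*pi}. \<bar>f2 k a u\<bar> = 1}"
proof (rule finite_subset)
  show "{u\<in>{0..2*pi}. \<bar>f2 k a u\<bar> = 1}
      \<subseteq> {t\<in>{0..<2*pi}. f2 k a t = 1} \<union> {t\<in>{0..<2*pi}. f2 k a t = -1} \<union> {2*pi}"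
    by (auto simp: abs_eq_iff)
  show "finite ({t\<in>{0..<2*pi}. f2 k a t = 1} \<union> {t\<in>{0..<2*pi}. f2 k a t = -1} \<union> {2*pi})"
    using finite_level_set_f2[OF assms] by simp
qed

section \<open>The polynomial \<open>P2n\<close> on the unit circle\<close>

text \<open>P2n with the coefficient of z^m multiplied by w m; the Euler operator multiplies the weights
  by m.\<close>

definition P2n_weighted :: "nat \<Rightarrow> (nat \<Rightarrow> int) \<Rightarrow> nat \<Rightarrow> (nat \<Rightarrow> complex) \<Rightarrow> complex poly" where
  "P2n_weighted k a n w = monom (w (2*n)) (2*n) + monom (w n * of_int (a 0)) n + monom (w 0) 0
     + (\<Sum>j\<in>{1..k}. monom (w (n + j) * of_int (a j)) (n + j) + monom (w (n - j) * of_int (a j)) (n - j))"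

lemma P2n_eq_weighted: "P2n k a n = P2n_weighted k a n (\<lambda>_. 1)"
  by (simp add: P2n_def P2n_weighted_def monom_0 one_pCons)

lemma euler_op_P2n_weighted:
  "euler_op (P2n_weighted k a n w) = P2n_weighted k a n (\<lambda>m. of_nat m * w m)"
  by (simp add: P2n_weighted_def euler_op_add euler_op_sum euler_op_monom mult.assoc)

lemma poly_P2n_weighted_cis:
  assumes "k \<le> n"
  shows "poly (P2n_weighted k a n w) (cis t) = cis (real n * t) *
    (w (2*n) * cis (real n * t) + w n * of_int (a 0) + w 0 * cis (- (real n * t))
     + (\<Sum>j\<in>{1..k}. of_int (a j) * (w (n + j) * cis (real j * t) + w (n - j) * cis (- (real j * t)))))"
proof -
  have block: "poly (\<Sum>j\<in>{1..k}. monom (w (n + j) * of_int (a j)) (n + j)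
        + monom (w (n - j) * of_int (a j)) (n - j)) (cis t)
      = cis (real n * t) * (\<Sum>j\<in>{1..k}. of_int (a j) * (w (n + j) * cis (real j * t)
        + w (n - j) * cis (- (real j * t))))"
    using assms by (subst poly_symmetric_block_cis) (auto simp: algebra_simps)
  have "cis t ^ (2*n) = cis (real n * t) * cis (real n * t)" "cis t ^ n = cis (real n * t)"
    "(1::complex) = cis (real n * t) * cis (- (real n * t))"
    by (simp_all add: Complex.DeMoivre cis_mult algebra_simps)
  then show ?thesis
    unfolding P2n_weighted_def poly_add block by (simp add: poly_monom algebra_simps)
qed

lemma poly_P2n_cis:
  assumes "k \<le> n"
  shows "poly (P2n k a n) (cis t) = 2 * cis (real n * t) * complex_of_real (cos (real n * t) - f2 k a t)"
proof -
  have "cis (real n * t) + of_int (a 0) + cis (- (real n * t))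
      + (\<Sum>j\<in>{1..k}. of_int (a j) * (cis (real j * t) + cis (- (real j * t))))
      = 2 * complex_of_real (cos (real n * t) - f2 k a t)"
    by (simp add: complex_eq_iff f2_def Re_sum Im_sum sum_distrib_left algebra_simps)
  then show ?thesis by (simp add: P2n_eq_weighted poly_P2n_weighted_cis[OF assms])
qed

lemma poly_euler_op_P2n_cis:
  assumes "k \<le> n"
  shows "poly (euler_op (P2n k a n)) (cis t) = 2 * cis (real n * t)
    * (of_nat n * (cis (real n * t) - complex_of_real (f2 k a t)) + \<i> * complex_of_real (f2' k a t))"
proof -
  have "(\<Sum>j\<in>{1..k}. of_int (a j) * (of_nat (n + j) * cis (real j * t) + of_nat (n - j) * cis (- (real j * t))))
      = (\<Sum>j\<in>{1..k}. complex_of_real (2 * real n * real_of_int (a j) * cos (real j * t))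
          + \<i> * complex_of_real (2 * real j * real_of_int (a j) * sin (real j * t)))"
    using assms by (intro sum.cong) (auto simp: complex_eq_iff of_nat_diff algebra_simps)
  then have "of_nat (2*n) * cis (real n * t) + of_nat n * of_int (a 0)
      + (\<Sum>j\<in>{1..k}. of_int (a j) * (of_nat (n + j) * cis (real j * t) + of_nat (n - j) * cis (- (real j * t))))
      = 2 * (of_nat n * (cis (real n * t) - complex_of_real (f2 k a t)) + \<i> * complex_of_real (f2' k a t))"
    by (simp add: complex_eq_iff f2_def f2'_def Re_sum Im_sum sum_distrib_left algebra_simps)
  then show ?thesis
    by (simp add: P2n_eq_weighted euler_op_P2n_weighted poly_P2n_weighted_cis[OF assms])
qed

lemma poly_euler_op2_P2n_cis:
  assumes "k \<le> n"
  shows "poly (euler_op (euler_op (P2n k a n))) (cis t) = cis (real n * t)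
    * ((of_nat n)\<^sup>2 * (4 * cis (real n * t) - 2 * complex_of_real (f2 k a t))
       + 2 * complex_of_real (f2'' k a t) + 4 * \<i> * of_nat n * complex_of_real (f2' k a t))"
proof -
  have "(\<Sum>j\<in>{1..k}. of_int (a j) * (of_nat (n + j) * (of_nat (n + j) * cis (real j * t))
          + of_nat (n - j) * (of_nat (n - j) * cis (- (real j * t)))))
      = (\<Sum>j\<in>{1..k}. complex_of_real (2 * ((real n)\<^sup>2 + (real j)\<^sup>2) * real_of_int (a j) * cos (real j * t))
          + \<i> * complex_of_real (4 * real n * real j * real_of_int (a j) * sin (real j * t)))"
    using assms by (intro sum.cong) (auto simp: complex_eq_iff of_nat_diff power2_eq_square algebra_simps)
  then have "of_nat (2*n) * (of_nat (2*n) * cis (real n * t)) + of_nat n * (of_nat n * of_int (a 0))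
      + (\<Sum>j\<in>{1..k}. of_int (a j) * (of_nat (n + j) * (of_nat (n + j) * cis (real j * t))
          + of_nat (n - j) * (of_nat (n - j) * cis (- (real j * t)))))
      = (of_nat n)\<^sup>2 * (4 * cis (real n * t) - 2 * complex_of_real (f2 k a t))
       + 2 * complex_of_real (f2'' k a t) + 4 * \<i> * of_nat n * complex_of_real (f2' k a t)"
    by (simp add: complex_eq_iff f2_def f2'_def f2''_def Re_sum Im_sum sum_distrib_left
        sum.distrib power2_eq_square algebra_simps)
  then show ?thesis
    by (simp add: P2n_eq_weighted euler_op_P2n_weighted poly_P2n_weighted_cis[OF assms] ac_simps)
qed

lemma coeff_P2n_ge:
  assumes "k < n" "m \<ge> 2*n"
  shows "coeff (P2n k a n) m = (if m = 2*n then 1 else 0)"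
proof -
  have "(\<Sum>j\<in>{1..k}. coeff (monom (of_int (a j) :: complex) (n + j)) m
      + coeff (monom (of_int (a j)) (n - j)) m) = 0"
    using assms by (intro sum.neutral) (auto simp: coeff_monom)
  then show ?thesis using assms by (simp add: P2n_def coeff_sum coeff_monom)
qed

lemma degree_P2n: "k < n \<Longrightarrow> degree (P2n k a n) = 2*n"
  using coeff_P2n_ge[of k n] by (intro antisym degree_le le_degree) auto

lemma P2n_nonzero: "k < n \<Longrightarrow> P2n k a n \<noteq> 0"
  using coeff_P2n_ge[of k n "2*n" a] by auto

lemma Cratio_P2n:
  assumes "k < n"
  shows "Cratio n (P2n k a n) = 1 - real (zeros_on (P2n k a n)) / (2 * real n)"
proof -
  have "real (zeros_inside (P2n k a n) + zeros_outside (P2n k a n)) + real (zeros_on (P2n k a n))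
      = 2 * real n"
    using arg_cong[OF zeros_inside_outside_on_sum[of "P2n k a n"], of real] degree_P2n[OF assms]
    by simp
  then show ?thesis using assms unfolding Cratio_def by (simp add: field_simps)
qed

lemma poly_P2n_cis_eq_0_iff:
  "k \<le> n \<Longrightarrow> poly (P2n k a n) (cis t) = 0 \<longleftrightarrow> cos (real n * t) = f2 k a t"
  by (simp add: poly_P2n_cis)

lemma double_root_P2n:
  assumes "k < n" "order (cis t) (P2n k a n) \<ge> 2"
  shows "cos (real n * t) = f2 k a t" "real n * sin (real n * t) + f2' k a t = 0"
proof -
  have nz: "P2n k a n \<noteq> 0" using P2n_nonzero[OF assms(1)] .
  then show "cos (real n * t) = f2 k a t"
    using assms order_root[of "P2n k a n" "cis t"] poly_P2n_cis_eq_0_iff[of k n] by force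
  then have bracket: "of_nat n * (cis (real n * t) - complex_of_real (f2 k a t))
      + \<i> * complex_of_real (f2' k a t) = complex_of_real (real n * sin (real n * t) + f2' k a t) * \<i>"
    by (simp add: complex_eq_iff)
  have "2 * cis (real n * t) * (of_nat n * (cis (real n * t) - complex_of_real (f2 k a t))
      + \<i> * complex_of_real (f2' k a t)) = 0"
    using poly_euler_op_eq_0_if_order_ge_2[OF nz assms(2)] poly_euler_op_P2n_cis[of k n a t] assms(1)
    by simp
  then have "complex_of_real (real n * sin (real n * t) + f2' k a t) * \<i> = 0"
    unfolding bracket by simp
  then show "real n * sin (real n * t) + f2' k a t = 0"
    by (metis complex_i_not_zero mult_eq_0_iff of_real_eq_0_iff)
qed

lemma triple_root_P2n:
  assumes "k < n" "order (cis t) (P2n k a n) \<ge> 3"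
  shows "(real n)\<^sup>2 * cos (real n * t) + f2'' k a t = 0"
proof -
  have nz: "P2n k a n \<noteq> 0" using P2n_nonzero[OF assms(1)] .
  have "cos (real n * t) = f2 k a t" "real n * sin (real n * t) + f2' k a t = 0"
    using double_root_P2n[OF assms(1)] assms(2) by auto
  then have c: "f2 k a t = cos (real n * t)" and s: "f2' k a t = - (real n * sin (real n * t))"
    by linarith+
  have "(of_nat n)\<^sup>2 * (4 * cis (real n * t) - 2 * complex_of_real (f2 k a t))
       + 2 * complex_of_real (f2'' k a t) + 4 * \<i> * of_nat n * complex_of_real (f2' k a t)
      = 2 * complex_of_real ((real n)\<^sup>2 * cos (real n * t) + f2'' k a t)"
    unfolding c s by (simp add: complex_eq_iff power2_eq_square algebra_simps)
  moreover have "cis (real n * t) * ((of_nat n)\<^sup>2 * (4 * cis (real n * t) - 2 * complex_of_real (f2 k a t))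
       + 2 * complex_of_real (f2'' k a t) + 4 * \<i> * of_nat n * complex_of_real (f2' k a t)) = 0"
    using poly_euler_op2_eq_0_if_order_ge_3[OF nz assms(2)] poly_euler_op2_P2n_cis[of k n a t] assms(1)
    by simp
  ultimately have "2 * complex_of_real ((real n)\<^sup>2 * cos (real n * t) + f2'' k a t) = 0"
    by (metis cis_neq_zero mult_eq_0_iff)
  then show ?thesis by (metis mult_eq_0_iff of_real_eq_0_iff zero_neq_numeral)
qed

lemma abs_cos_gt_if_abs_sin_lt:
  fixes x u v :: real
  assumes "u\<^sup>2 + v\<^sup>2 \<le> 1" "\<bar>sin x\<bar> < u"
  shows "\<bar>cos x\<bar> > v"
proof (rule ccontr)
  assume "\<not> \<bar>cos x\<bar> > v"
  then have "(cos x)\<^sup>2 \<le> v\<^sup>2" using power_mono[of "\<bar>cos x\<bar>" v 2] by simp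
  moreover have "(sin x)\<^sup>2 < u\<^sup>2" using power_strict_mono[of "\<bar>sin x\<bar>" u 2] assms(2) by simp
  ultimately show False using assms(1) sin_cos_squared_add[of x] by linarith
qed

lemma cos_sq_gt_if_deriv_zero:
  fixes f' :: "real \<Rightarrow> real"
  assumes "\<And>t. \<bar>f' t\<bar> \<le> B" "2 * B < real n" "real n * sin (real n * s) + f' s = 0"
  shows "3/4 < (cos (real n * s))\<^sup>2"
proof -
  have "real n * \<bar>sin (real n * s)\<bar> = \<bar>f' s\<bar>"
    using arg_cong[OF assms(3)[unfolded add_eq_0_iff], of abs] by (simp add: abs_mult)
  then have "real n * (2 * \<bar>sin (real n * s)\<bar>) < real n * 1" using assms(1)[of s] assms(2) by linarith
  then have "2 * \<bar>sin (real n * s)\<bar> < 1" by (rule mult_left_less_imp_less) simp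
  then have "(sin (real n * s))\<^sup>2 < (1/2)\<^sup>2"
    using power_strict_mono[of "\<bar>sin (real n * s)\<bar>" "1/2" 2] by fastforce
  then show ?thesis using sin_cos_squared_add[of "real n * s"] by (simp add: power2_eq_square)
qed

lemma cos_sq_le_if_second_deriv_zero:
  fixes f'' :: "real \<Rightarrow> real"
  assumes "\<And>t. \<bar>f'' t\<bar> \<le> B" "2 * B < real n" "(real n)\<^sup>2 * cos (real n * r) + f'' r = 0"
  shows "(cos (real n * r))\<^sup>2 \<le> 3/4"
proof -
  have n: "1 \<le> real n" using assms(1)[of r] assms(2) by (simp add: Suc_le_eq)
  have "(real n)\<^sup>2 * \<bar>cos (real n * r)\<bar> = \<bar>f'' r\<bar>"
    using arg_cong[OF assms(3)[unfolded add_eq_0_iff], of abs] by (simp add: abs_mult)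
  then have "real n * (real n * \<bar>cos (real n * r)\<bar>) \<le> real n * (1/2)"
    using assms(1)[of r] assms(2) by (simp add: power2_eq_square)
  then have "real n * \<bar>cos (real n * r)\<bar> \<le> 1/2" using n mult_le_cancel_left_pos by simp
  moreover have "\<bar>cos (real n * r)\<bar> \<le> real n * \<bar>cos (real n * r)\<bar>"
    using n by (simp add: mult_le_cancel_right1)
  ultimately have "(cos (real n * r))\<^sup>2 \<le> (1/2)\<^sup>2"
    using power_mono[of "\<bar>cos (real n * r)\<bar>" "1/2" 2] by simp
  then show ?thesis by (simp add: power2_eq_square)
qed

lemma order_P2n_cis_le_2:
  assumes "k < n" "real n \<ge> 2 * (coeff_moment k a 1 + coeff_moment k a 2) + 1"
  shows "order (cis t) (P2n k a n) \<le> 2"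
proof (rule ccontr)
  assume "\<not> ?thesis"
  then have "order (cis t) (P2n k a n) \<ge> 3" by simp
  then have "real n * sin (real n * t) + f2' k a t = 0" "(real n)\<^sup>2 * cos (real n * t) + f2'' k a t = 0"
    using double_root_P2n(2)[OF assms(1)] triple_root_P2n[OF assms(1)] by auto
  moreover have "2 * coeff_moment k a 1 < real n" "2 * coeff_moment k a 2 < real n"
    using assms(2) coeff_moment_nonneg[of k a 1] coeff_moment_nonneg[of k a 2] by auto
  ultimately have "3/4 < (cos (real n * t))\<^sup>2" "(cos (real n * t))\<^sup>2 \<le> 3/4"
    using cos_sq_gt_if_deriv_zero[where f'="f2' k a", OF abs_f2'_le]
      cos_sq_le_if_second_deriv_zero[where f''="f2'' k a", OF abs_f2''_le] by auto
  then show False by simp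
qed

lemma order_P2n_cis_le_1:
  assumes "k < n" "0 < \<eta>" "\<eta> \<le> 1/2" "real n * \<eta> > coeff_moment k a 1" "\<bar>f2 k a t\<bar> \<le> 1 - \<eta>"
  shows "order (cis t) (P2n k a n) \<le> 1"
proof (rule ccontr)
  assume "\<not> ?thesis"
  then have "order (cis t) (P2n k a n) \<ge> 2" by simp
  then have c: "cos (real n * t) = f2 k a t" and s: "real n * sin (real n * t) = - f2' k a t"
    using double_root_P2n[OF assms(1)] by (simp_all add: eq_neg_iff_add_eq_0)
  have "real n * \<bar>sin (real n * t)\<bar> \<le> coeff_moment k a 1"
    using s abs_f2'_le[of k a t] by (simp add: abs_mult)
  then have "real n * \<bar>sin (real n * t)\<bar> < real n * \<eta>" using assms(4) by linarith
  then have "\<bar>sin (real n * t)\<bar> < \<eta>" by (simp add: mult_less_cancel_left)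
  then have "\<bar>cos (real n * t)\<bar> > 1 - \<eta>"
    by (rule abs_cos_gt_if_abs_sin_lt[rotated]) (use assms(2,3) in \<open>simp add: power2_eq_square algebra_simps\<close>)
  then show False using c assms(5) by simp
qed

section \<open>Counting solutions of \<open>cos (n t) = f t\<close>\<close>

lemma Rolle_has_real_derivative:
  fixes g :: "real \<Rightarrow> real"
  assumes "a < b" "g a = g b" "\<And>t. (g has_real_derivative g' t) (at t)"
  obtains z where "a < z" "z < b" "g' z = 0"
proof -
  have "continuous_on {a..b} g"
    using assms(3) by (intro continuous_at_imp_continuous_on ballI DERIV_isCont) blast
  moreover have "\<And>x. g differentiable (at x)" using assms(3) real_differentiable_def by blast
  ultimately obtain z where "a < z" "z < b" "DERIV g z :> 0" using Rolle[OF assms(1,2)] by blast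
  then show ?thesis using that DERIV_unique assms(3) by blast
qed

lemma card_zeros_le_Suc_card_deriv_zeros:
  fixes g :: "real \<Rightarrow> real"
  assumes der: "\<And>t. (g has_real_derivative g' t) (at t)"
    and Z: "finite Z" "Z \<subseteq> {\<alpha>..\<beta>}" "\<forall>t\<in>Z. g t = 0"
  shows "\<exists>F\<subseteq>{\<alpha>..\<beta>}. finite F \<and> (\<forall>t\<in>F. g' t = 0) \<and> card Z \<le> card F + 1"
  using Z
proof (induction Z arbitrary: \<beta> rule: finite_linorder_max_induct)
  case (insert b A)
  show ?case
  proof (cases "A = {}")
    case False
    define m where "m = Max A"
    have m: "m \<in> A" "m < b" "A \<subseteq> {\<alpha>..m}"
      using Max_in[OF insert.hyps(1) False] insert.hyps insert.prems(1) by (auto simp: m_def)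
    obtain F where F: "F \<subseteq> {\<alpha>..m}" "finite F" "\<forall>t\<in>F. g' t = 0" "card A \<le> card F + 1"
      using insert.IH[OF m(3)] insert.prems(2) by auto
    obtain r where r: "m < r" "r < b" "g' r = 0"
      using Rolle_has_real_derivative[OF m(2) _ der] insert.prems(2) m(1) by auto
    have "r \<notin> F" "b \<notin> A" using F(1) r(1) insert.hyps(2) by auto
    then have "card (insert b A) \<le> card (insert r F) + 1" using F insert.hyps(1) by simp
    moreover have "insert r F \<subseteq> {\<alpha>..\<beta>}" using F(1) m r insert.prems(1) by force
    ultimately show ?thesis using F r by blast
  qed (rule exI[of _ "{}"], simp)
qed (rule exI[of _ "{}"], simp)

lemma cos_sq_ge_min_on_half_period:
  fixes x y z :: real
  assumes "of_int m * pi - pi/2 \<le> x" "x \<le> y" "y \<le> z" "z \<le> of_int m * pi + pi/2"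
  shows "min ((cos x)\<^sup>2) ((cos z)\<^sup>2) \<le> (cos y)\<^sup>2"
proof -
  have shift: "(cos (u + of_int m * pi))\<^sup>2 = (cos u)\<^sup>2" for u
    using sin_npi_int[of m] cos_npi_int[of m] by (simp add: cos_add mult.commute)
  define x' y' z' where x': "x' = x - of_int m * pi" and y': "y' = y - of_int m * pi"
    and z': "z' = z - of_int m * pi"
  have range: "-(pi/2) \<le> x'" "x' \<le> y'" "y' \<le> z'" "z' \<le> pi/2"
    using assms unfolding x' y' z' by auto
  have "min (cos x') (cos z') \<le> cos y'"
  proof (cases "0 \<le> y'")
    case True
    then have "cos z' \<le> cos y'" using range by (intro cos_monotone_0_pi_le) auto
    then show ?thesis by simp
  next
    case False
    then have "cos (- x') \<le> cos (- y')" using range by (intro cos_monotone_0_pi_le) auto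
    then show ?thesis by simp
  qed
  moreover have "0 \<le> cos x'" "0 \<le> cos z'" using range by (auto intro!: cos_ge_zero)
  ultimately have "min ((cos x')\<^sup>2) ((cos z')\<^sup>2) \<le> (cos y')\<^sup>2"
    by (auto simp: min_def intro: power_mono split: if_splits)
  then show ?thesis using shift unfolding x' y' z' by (metis diff_add_cancel)
qed

lemma card_le_if_inj_on_floor:
  fixes c d \<alpha> \<beta> :: real
  assumes "0 < c" "\<alpha> \<le> \<beta>" "F \<subseteq> {\<alpha>..\<beta>}" "inj_on (\<lambda>s. \<lfloor>c * s + d\<rfloor>) F"
  shows "real (card F) \<le> c * (\<beta> - \<alpha>) + 2"
proof -
  have "(\<lambda>s. \<lfloor>c * s + d\<rfloor>) ` F \<subseteq> {\<lfloor>c * \<alpha> + d\<rfloor>..\<lfloor>c * \<beta> + d\<rfloor>}"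
    using assms(1,3) by (auto intro!: floor_mono simp: subset_iff)
  then have "card F \<le> card {\<lfloor>c * \<alpha> + d\<rfloor>..\<lfloor>c * \<beta> + d\<rfloor>}"
    using card_mono[OF finite_atLeastAtMost_int] card_image[OF assms(4)] by metis
  also have "\<dots> = nat (\<lfloor>c * \<beta> + d\<rfloor> - \<lfloor>c * \<alpha> + d\<rfloor> + 1)" by simp
  finally have "real (card F) \<le> real (nat (\<lfloor>c * \<beta> + d\<rfloor> - \<lfloor>c * \<alpha> + d\<rfloor> + 1))" by simp
  moreover have "\<lfloor>c * \<alpha> + d\<rfloor> \<le> \<lfloor>c * \<beta> + d\<rfloor>" using assms(1,2) by (intro floor_mono) simp
  ultimately have "real (card F) \<le> real_of_int (\<lfloor>c * \<beta> + d\<rfloor> - \<lfloor>c * \<alpha> + d\<rfloor> + 1)" by simp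
  then show ?thesis by (simp add: right_diff_distrib) linarith
qed

lemma nearest_multiple_of_pi:
  fixes x :: real
  shows "of_int \<lfloor>x / pi + 1/2\<rfloor> * pi - pi/2 \<le> x" "x < of_int \<lfloor>x / pi + 1/2\<rfloor> * pi + pi/2"
proof -
  have "of_int \<lfloor>x / pi + 1/2\<rfloor> * pi \<le> (x / pi + 1/2) * pi"
    by (intro mult_right_mono) (linarith, simp)
  moreover have "(x / pi + 1/2) * pi < (of_int \<lfloor>x / pi + 1/2\<rfloor> + 1) * pi"
    by (intro mult_strict_right_mono) (linarith, simp)
  ultimately show "of_int \<lfloor>x / pi + 1/2\<rfloor> * pi - pi/2 \<le> x" "x < of_int \<lfloor>x / pi + 1/2\<rfloor> * pi + pi/2"
    by (simp_all add: algebra_simps)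
qed

lemma card_deriv_zeros_le:
  fixes f' f'' :: "real \<Rightarrow> real"
  assumes der: "\<And>t. (f' has_real_derivative f'' t) (at t)"
    and bounds: "\<And>t. \<bar>f' t\<bar> \<le> M1" "\<And>t. \<bar>f'' t\<bar> \<le> M2" "2 * (M1 + M2) + 1 \<le> real n"
    and F: "\<alpha> \<le> \<beta>" "F \<subseteq> {\<alpha>..\<beta>}" "\<forall>t\<in>F. real n * sin (real n * t) + f' t = 0"
  shows "real (card F) \<le> real n * (\<beta> - \<alpha>) / pi + 2"
proof -
  have M: "0 \<le> M1" "0 \<le> M2" using bounds(1,2) by (meson abs_ge_zero order.trans)+
  then have n: "0 < real n" "2 * M1 < real n" "2 * M2 < real n" using bounds(3) by auto
  define bin where "bin s = \<lfloor>real n * s / pi + 1/2\<rfloor>" for s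
  \<comment> \<open>Between two zeros of the derivative in the same bin, Rolle gives a zero of the second
    derivative, where cos(nt)^2 is small; but on a bin cos(nt)^2 is at least its smaller value at
    the two zeros, which are large.\<close>
  have "inj_on bin F"
  proof (rule linorder_inj_onI')
    fix s1 s2 assume s: "s1 \<in> F" "s2 \<in> F" "s1 < s2"
    define h where "h t = real n * sin (real n * t) + f' t" for t
    have h': "(h has_real_derivative (real n)\<^sup>2 * cos (real n * t) + f'' t) (at t)" for t
      unfolding h_def[abs_def] by (auto intro!: derivative_eq_intros der simp: power2_eq_square)
    have "h s1 = h s2" using F(3) s(1,2) by (simp add: h_def)
    then obtain r where r: "s1 < r" "r < s2" "(real n)\<^sup>2 * cos (real n * r) + f'' r = 0"
      by (rule Rolle_has_real_derivative[OF s(3) _ h'])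
    show "bin s1 \<noteq> bin s2"
    proof
      assume same_bin: "bin s1 = bin s2"
      have "min ((cos (real n * s1))\<^sup>2) ((cos (real n * s2))\<^sup>2) \<le> (cos (real n * r))\<^sup>2"
      proof (rule cos_sq_ge_min_on_half_period[of "bin s1"])
        show "of_int (bin s1) * pi - pi/2 \<le> real n * s1" "real n * s2 \<le> of_int (bin s1) * pi + pi/2"
          using nearest_multiple_of_pi[of "real n * s1"] nearest_multiple_of_pi[of "real n * s2"] same_bin
          by (simp_all add: bin_def)
        show "real n * s1 \<le> real n * r" "real n * r \<le> real n * s2" using r n(1) by simp_all
      qed
      moreover have "3/4 < (cos (real n * s1))\<^sup>2" "3/4 < (cos (real n * s2))\<^sup>2"
        using cos_sq_gt_if_deriv_zero[where f'=f' and B=M1, OF bounds(1) n(2)] F(3) s(1,2) by blast+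
      moreover have "(cos (real n * r))\<^sup>2 \<le> 3/4"
        using cos_sq_le_if_second_deriv_zero[where f''=f'' and B=M2, OF bounds(2) n(3) r(3)] .
      ultimately show False by (simp add: min_def split: if_split_asm)
    qed
  qed
  then have "real (card F) \<le> real n / pi * (\<beta> - \<alpha>) + 2"
    using card_le_if_inj_on_floor[OF _ F(1,2), of "real n / pi" "1/2"] n(1) unfolding bin_def by simp
  then show ?thesis by simp
qed

lemma card_solutions_cos_eq_le:
  fixes f f' f'' :: "real \<Rightarrow> real"
  assumes der: "\<And>t. (f has_real_derivative f' t) (at t)" "\<And>t. (f' has_real_derivative f'' t) (at t)"
    and bounds: "\<And>t. \<bar>f' t\<bar> \<le> M1" "\<And>t. \<bar>f'' t\<bar> \<le> M2" "2 * (M1 + M2) + 1 \<le> real n"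
    and Z: "\<alpha> \<le> \<beta>" "finite Z" "Z \<subseteq> {\<alpha>..\<beta>}" "\<forall>t\<in>Z. cos (real n * t) = f t"
  shows "real (card Z) \<le> real n * (\<beta> - \<alpha>) / pi + 3"
proof -
  have g': "((\<lambda>t. cos (real n * t) - f t) has_real_derivative - (real n * sin (real n * t) + f' t)) (at t)"
    for t by (auto intro!: derivative_eq_intros der)
  obtain F where F: "F \<subseteq> {\<alpha>..\<beta>}" "finite F" "\<forall>t\<in>F. - (real n * sin (real n * t) + f' t) = 0"
    "card Z \<le> card F + 1"
    using card_zeros_le_Suc_card_deriv_zeros[OF g' Z(2,3)] Z(4) by auto
  have "real (card F) \<le> real n * (\<beta> - \<alpha>) / pi + 2"
    using F(3) by (intro card_deriv_zeros_le[OF der(2) bounds Z(1) F(1)]) (auto simp: add_eq_0_iff)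
  then show ?thesis using F(4) by linarith
qed

lemma IVT_opposite_signs:
  fixes g :: "real \<Rightarrow> real"
  assumes "a \<le> b" "continuous_on {a..b} g" "g a * g b < 0"
  obtains x where "a < x" "x < b" "g x = 0"
proof -
  have "\<exists>x. a \<le> x \<and> x \<le> b \<and> g x = 0"
  proof (cases "g a < 0")
    case True
    then show ?thesis using IVT'[of g a 0 b] assms by (smt (verit) mult_less_0_iff)
  next
    case False
    then show ?thesis using IVT2'[of g b 0 a] assms by (smt (verit) mult_less_0_iff)
  qed
  then obtain x where "a \<le> x" "x \<le> b" "g x = 0" by blast
  moreover have "x \<noteq> a" "x \<noteq> b" using assms(3) \<open>g x = 0\<close> by auto
  ultimately show ?thesis using that by force
qed

lemma solution_cos_eq_between_extrema:
  fixes f :: "real \<Rightarrow> real" and m :: int and n :: nat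
  defines "x \<equiv> of_int m * pi / real n" and "y \<equiv> of_int (m + 1) * pi / real n"
  assumes "0 < n" "continuous_on {x..y} f" "\<bar>f x\<bar> < 1" "\<bar>f y\<bar> < 1"
  shows "\<exists>r. x < r \<and> r < y \<and> cos (real n * r) = f r"
proof -
  have cos_node: "cos (real n * (of_int j * pi / real n)) = (if even j then 1 else -1)" for j
    using assms(3) cos_npi_int[of j] by (simp add: mult.commute)
  have "(cos (real n * x) - f x) * (cos (real n * y) - f y) < 0"
    using assms(5,6) unfolding x_def y_def cos_node by (auto simp: mult_less_0_iff abs_less_iff)
  moreover have "x \<le> y" unfolding x_def y_def using assms(3) by (simp add: divide_right_mono)
  moreover have "continuous_on {x..y} (\<lambda>t. cos (real n * t) - f t)"
    using assms(4) by (intro continuous_intros) auto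
  ultimately obtain r where "x < r" "r < y" "cos (real n * r) - f r = 0"
    using IVT_opposite_signs by blast
  then show ?thesis by auto
qed

lemma card_solutions_cos_eq_ge:
  fixes f :: "real \<Rightarrow> real"
  assumes f: "continuous_on {\<alpha>..\<beta>} f" "\<forall>t\<in>{\<alpha>..\<beta>}. \<bar>f t\<bar> < 1"
    and n: "0 < n" and fin: "finite {t\<in>{\<alpha>..<\<beta>}. cos (real n * t) = f t}"
  shows "real n * (\<beta> - \<alpha>) / pi - 2 \<le> real (card {t\<in>{\<alpha>..<\<beta>}. cos (real n * t) = f t})"
proof -
  define lo hi where "lo = \<lceil>real n * \<alpha> / pi\<rceil>" and "hi = \<lfloor>real n * \<beta> / pi\<rfloor>"
  define node where "node m = real_of_int m * pi / real n" for m
  have node_mono: "node m1 \<le> node m2" if "m1 \<le> m2" for m1 m2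
    using that n unfolding node_def by (intro divide_right_mono mult_right_mono) auto
  have node_in: "\<alpha> \<le> node m" "node (m + 1) \<le> \<beta>" if "m \<in> {lo..<hi}" for m
  proof -
    have "real n * \<alpha> / pi \<le> of_int m" using that unfolding lo_def by (simp add: ceiling_le_iff)
    moreover have "m + 1 \<le> hi" using that by simp
    then have "of_int (m + 1) \<le> real n * \<beta> / pi" unfolding hi_def by (simp only: le_floor_iff)
    ultimately
    show "\<alpha> \<le> node m" "node (m + 1) \<le> \<beta>" using n unfolding node_def by (simp_all add: field_simps)
  qed
  have "\<exists>r. node m < r \<and> r < node (m + 1) \<and> cos (real n * r) = f r" if m: "m \<in> {lo..<hi}" for m
    unfolding node_def using node_in[OF m] node_mono[of m "m + 1"] f n
    by (intro solution_cos_eq_between_extrema)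
       (auto intro: continuous_on_subset simp: node_def simp del: of_int_add)
  then obtain r where r: "\<And>m. m \<in> {lo..<hi} \<Longrightarrow> node m < r m \<and> r m < node (m + 1) \<and> cos (real n * r m) = f (r m)"
    by metis
  have "inj_on r {lo..<hi}"
  proof (rule linorder_inj_onI')
    fix i j assume ij: "i \<in> {lo..<hi}" "j \<in> {lo..<hi}" "i < j"
    then have "r i < node (i + 1)" "node (i + 1) \<le> node j" "node j < r j"
      using r[OF ij(1)] r[OF ij(2)] node_mono[of "i + 1" j] by auto
    then show "r i \<noteq> r j" by simp
  qed
  moreover have "r ` {lo..<hi} \<subseteq> {t\<in>{\<alpha>..<\<beta>}. cos (real n * t) = f t}"
    using r node_in by force
  ultimately have "card {lo..<hi} \<le> card {t\<in>{\<alpha>..<\<beta>}. cos (real n * t) = f t}"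
    using card_inj_on_le fin by blast
  moreover have "real n * (\<beta> - \<alpha>) / pi - 2 \<le> real_of_int (hi - lo)"
    unfolding lo_def hi_def by (simp add: diff_divide_distrib right_diff_distrib) linarith
  ultimately show ?thesis by simp
qed

section \<open>Cells of the uniform partition of \<open>[0, 2\<pi>]\<close>\<close>

definition cell :: "nat \<Rightarrow> nat \<Rightarrow> real set" where
  "cell N i = {grid N i..grid N (Suc i)}"

lemma cell_containing:
  assumes "N \<ge> 1" "t \<in> {0..2*pi}"
  obtains i where "i < N" "t \<in> cell N i"
proof (cases "t < 2*pi")
  case True
  define i where "i = nat \<lfloor>t / (2*pi / real N)\<rfloor>"
  have "real i \<le> t / (2*pi / real N)" "t / (2*pi / real N) < real i + 1"
    using assms(2) unfolding i_def by auto
  moreover have "t / (2*pi / real N) < real N" using True assms(1) by (simp add: field_simps)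
  ultimately have "real i < real N" by linarith
  moreover have "grid N i \<le> t" "t \<le> grid N (Suc i)"
    using \<open>real i \<le> _\<close> \<open>_ < real i + 1\<close> assms(1) unfolding grid_def by (auto simp: field_simps)
  ultimately show ?thesis using that by (auto simp: cell_def)
next
  case False
  then have "t = 2*pi" using assms(2) by simp
  then show ?thesis
    using that[of "N - 1"] assms(1) grid_le_2pi[of "N - 1" N] by (auto simp: cell_def grid_def)
qed

definition good_cells :: "(real \<Rightarrow> real) \<Rightarrow> nat \<Rightarrow> nat set" where
  "good_cells f N = {i. i < N \<and> (\<forall>t\<in>cell N i. \<bar>f t\<bar> < 1)}"

definition bad_cells :: "(real \<Rightarrow> real) \<Rightarrow> nat \<Rightarrow> nat set" where
  "bad_cells f N = {i. i < N \<and> (\<forall>t\<in>cell N i. \<bar>f t\<bar> > 1)}"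

definition mixed_cells :: "(real \<Rightarrow> real) \<Rightarrow> nat \<Rightarrow> nat set" where
  "mixed_cells f N = {..<N} - good_cells f N - bad_cells f N"

lemma cells_partition:
  "{..<N} = good_cells f N \<union> mixed_cells f N \<union> bad_cells f N"
  "good_cells f N \<inter> mixed_cells f N = {}" "(good_cells f N \<union> mixed_cells f N) \<inter> bad_cells f N = {}"
proof -
  have "grid N i \<in> cell N i" for i by (simp add: cell_def grid_mono)
  then have "i \<notin> good_cells f N \<or> i \<notin> bad_cells f N" for i
    unfolding good_cells_def bad_cells_def by force
  then show "{..<N} = good_cells f N \<union> mixed_cells f N \<union> bad_cells f N"
    "good_cells f N \<inter> mixed_cells f N = {}" "(good_cells f N \<union> mixed_cells f N) \<inter> bad_cells f N = {}"
    unfolding mixed_cells_def by (auto simp: good_cells_def bad_cells_def)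
qed

lemma finite_cells [simp]:
  "finite (good_cells f N)" "finite (mixed_cells f N)" "finite (bad_cells f N)"
  unfolding good_cells_def bad_cells_def mixed_cells_def by auto

lemma card_good_cells_le: "card (good_cells f N) \<le> N"
  using card_mono[of "{..<N}" "good_cells f N"] by (auto simp: good_cells_def)

lemma mixed_cell_meets_unit_level:
  assumes "continuous_on UNIV f" "i \<in> mixed_cells f N"
  shows "\<exists>u\<in>cell N i. \<bar>f u\<bar> = 1"
proof -
  obtain s t where st: "s \<in> cell N i" "t \<in> cell N i" "\<bar>f s\<bar> \<le> 1" "1 \<le> \<bar>f t\<bar>"
    using assms(2) unfolding mixed_cells_def good_cells_def bad_cells_def by (auto simp: not_less)
  have cont: "continuous_on S (\<lambda>x. \<bar>f x\<bar>)" for S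
    using continuous_on_subset[OF assms(1)] by (intro continuous_intros) auto
  have "\<exists>u. min s t \<le> u \<and> u \<le> max s t \<and> \<bar>f u\<bar> = 1"
  proof (cases "s \<le> t")
    case True then show ?thesis using IVT'[of "\<lambda>x. \<bar>f x\<bar>" s 1 t, OF st(3,4) _ cont] by auto
  next
    case False then show ?thesis using IVT2'[of "\<lambda>x. \<bar>f x\<bar>" s 1 t, OF st(3,4) _ cont] by auto
  qed
  then show ?thesis using st(1,2) unfolding cell_def by (metis atLeastAtMost_iff max_def min_def order.trans)
qed

lemma card_mixed_cells_le:
  assumes "continuous_on UNIV f" "N \<ge> 1" "finite {u\<in>{0..2*pi}. \<bar>f u\<bar> = 1}"
  shows "card (mixed_cells f N) \<le> 2 * card {u\<in>{0..2*pi}. \<bar>f u\<bar> = 1}"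
proof -
  define L where "L = {u\<in>{0..2*pi}. \<bar>f u\<bar> = 1}"
  define h where "h = 2*pi / real N"
  have h: "h > 0" unfolding h_def using assms(2) by simp
  define cells_at where "cells_at u = {nat \<lfloor>u / h\<rfloor> - 1, nat \<lfloor>u / h\<rfloor>}" for u
  have "mixed_cells f N \<subseteq> (\<Union>u\<in>L. cells_at u)"
  proof
    fix i assume i: "i \<in> mixed_cells f N"
    obtain u where u: "u \<in> cell N i" "\<bar>f u\<bar> = 1" using mixed_cell_meets_unit_level[OF assms(1) i] by blast
    have "i < N" using i by (simp add: mixed_cells_def)
    then have "u \<in> L"
      using u grid_nonneg[of N i] grid_le_2pi[of "Suc i" N] unfolding L_def cell_def by auto
    have "real i * h \<le> u" "u \<le> (real i + 1) * h" using u(1) unfolding cell_def grid_def h_def by (auto simp: add.commute)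
    then have "real i \<le> u / h" "u / h \<le> real i + 1" using h by (simp_all add: field_simps)
    then have "int i \<le> \<lfloor>u / h\<rfloor>" "\<lfloor>u / h\<rfloor> \<le> int i + 1" by (simp_all add: le_floor_iff floor_le_iff)
    then have "i \<in> cells_at u" unfolding cells_at_def by auto
    then show "i \<in> (\<Union>u\<in>L. cells_at u)" using \<open>u \<in> L\<close> by blast
  qed
  then have "card (mixed_cells f N) \<le> card (\<Union>u\<in>L. cells_at u)"
    using assms(3) by (intro card_mono) (auto simp: L_def cells_at_def)
  also have "\<dots> \<le> (\<Sum>u\<in>L. card (cells_at u))" using assms(3) unfolding L_def by (rule card_UN_le)
  also have "\<dots> \<le> (\<Sum>u\<in>L. 2)" by (intro sum_mono) (auto simp: cells_at_def card_insert_le_m1)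
  finally show ?thesis by (simp add: L_def)
qed

lemma margin_on_good_cells:
  assumes "continuous_on UNIV f"
  obtains \<eta> where "0 < \<eta>" "\<eta> \<le> 1/2" "\<And>i t. i \<in> good_cells f N \<Longrightarrow> t \<in> cell N i \<Longrightarrow> \<bar>f t\<bar> \<le> 1 - \<eta>"
proof -
  define C where "C = (\<Union>i\<in>good_cells f N. cell N i)"
  show ?thesis
  proof (cases "C = {}")
    case True
    then show ?thesis using that[of "1/2"] unfolding C_def by auto
  next
    case False
    have "compact C" unfolding C_def cell_def by (intro compact_UN) auto
    moreover have "continuous_on C (\<lambda>x. \<bar>f x\<bar>)"
      using continuous_on_subset[OF assms] by (intro continuous_intros) auto
    ultimately obtain s where s: "s \<in> C" "\<And>y. y \<in> C \<Longrightarrow> \<bar>f y\<bar> \<le> \<bar>f s\<bar>"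
      using continuous_attains_sup[OF _ False] by blast
    have "\<bar>f s\<bar> < 1" using s(1) unfolding C_def good_cells_def by auto
    show ?thesis
    proof (rule that[of "min (1/2) (1 - \<bar>f s\<bar>)"])
      show "0 < min (1/2) (1 - \<bar>f s\<bar>)" "min (1/2) (1 - \<bar>f s\<bar>) \<le> 1/2"
        using \<open>\<bar>f s\<bar> < 1\<close> by (auto simp: min_def)
      fix i t assume "i \<in> good_cells f N" "t \<in> cell N i"
      then have "\<bar>f t\<bar> \<le> \<bar>f s\<bar>" using s(2) unfolding C_def by blast
      then show "\<bar>f t\<bar> \<le> 1 - min (1/2) (1 - \<bar>f s\<bar>)" by linarith
    qed
  qed
qed

definition band :: "(real \<Rightarrow> real) \<Rightarrow> real set" where
  "band f = {t\<in>{0..2*pi}. \<bar>f t\<bar> < 1}"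

lemma band_borel: "continuous_on UNIV f \<Longrightarrow> band f \<in> sets lborel"
proof -
  assume "continuous_on UNIV f"
  then have "open {t. \<bar>f t\<bar> < 1}" by (intro open_Collect_less continuous_intros) auto
  then have "{0..2*pi} \<inter> {t. \<bar>f t\<bar> < 1} \<in> sets lborel" by auto
  moreover have "{0..2*pi} \<inter> {t. \<bar>f t\<bar> < 1} = band f" unfolding band_def by auto
  ultimately show ?thesis by simp
qed

lemma cell_fmeasurable: "cell N i \<in> fmeasurable lborel"
  using fmeasurable_cbox[of "grid N i" "grid N (Suc i)"] by (simp add: cell_def)

lemma measure_cell: "measure lborel (cell N i) = 2*pi / real N"
  using grid_mono[of i "Suc i" N] grid_Suc_diff[of N i] by (simp add: cell_def)

lemma measure_band_le:
  assumes "continuous_on UNIV f" "N \<ge> 1"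
  shows "measure lborel (band f) \<le> real (card (good_cells f N) + card (mixed_cells f N)) * (2*pi / real N)"
proof -
  define S where "S = good_cells f N \<union> mixed_cells f N"
  have "band f \<subseteq> (\<Union>i\<in>S. cell N i)"
  proof
    fix t assume t: "t \<in> band f"
    obtain i where i: "i < N" "t \<in> cell N i"
      using cell_containing[OF assms(2)] t by (auto simp: band_def)
    then have "i \<notin> bad_cells f N" using t unfolding bad_cells_def band_def by force
    then have "i \<in> S" using i(1) cells_partition(1)[where f=f and N=N] unfolding S_def by blast
    then show "t \<in> (\<Union>i\<in>S. cell N i)" using i(2) by blast
  qed
  moreover have "(\<Union>i\<in>S. cell N i) \<in> fmeasurable lborel"
    using cell_fmeasurable by (intro fmeasurable.finite_UN) (auto simp: S_def)
  ultimately have "measure lborel (band f) \<le> measure lborel (\<Union>i\<in>S. cell N i)"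
    using band_borel[OF assms(1)] by (intro measure_mono_fmeasurable) auto
  also have "\<dots> \<le> (\<Sum>i\<in>S. measure lborel (cell N i))"
    using cell_fmeasurable by (intro measure_UNION_le) (auto simp: S_def fmeasurable_def)
  also have "\<dots> = real (card S) * (2*pi / real N)" by (simp add: measure_cell)
  also have "card S = card (good_cells f N) + card (mixed_cells f N)"
    unfolding S_def by (rule card_Un_disjoint) (use cells_partition(2) in auto)
  finally show ?thesis .
qed

lemma measure_band_ge:
  assumes "continuous_on UNIV f" "N \<ge> 1"
  shows "real (card (good_cells f N)) * (2*pi / real N) \<le> measure lborel (band f)"
proof -
  define I where "I i = {grid N i..<grid N (Suc i)}" for i
  have sub: "(\<Union>i\<in>good_cells f N. I i) \<subseteq> band f"
  proof
    fix t assume "t \<in> (\<Union>i\<in>good_cells f N. I i)"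
    then obtain i where i: "i \<in> good_cells f N" "t \<in> I i" by blast
    then have "i < N" "t \<in> cell N i" by (auto simp: good_cells_def I_def cell_def)
    then show "t \<in> band f"
      using i grid_nonneg[of N i] grid_le_2pi[of "Suc i" N] by (auto simp: good_cells_def band_def cell_def)
  qed
  have fm: "I i \<in> fmeasurable lborel" for i
    unfolding I_def by (rule fmeasurableI2[OF cell_fmeasurable[of N i]]) (auto simp: cell_def)
  have disj: "pairwise (\<lambda>i j. disjnt (I i) (I j)) (good_cells f N)"
  proof (rule pairwiseI)
    fix i j :: nat assume "i \<noteq> j"
    then consider "Suc i \<le> j" | "Suc j \<le> i" by linarith
    then have "grid N (Suc i) \<le> grid N j \<or> grid N (Suc j) \<le> grid N i"
      by cases (simp_all add: grid_mono)
    then show "disjnt (I i) (I j)" unfolding I_def disjnt_def by auto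
  qed
  have "measure lborel (I i) = 2*pi / real N" for i
    using grid_mono[of i "Suc i" N] grid_Suc_diff[of N i] by (simp add: I_def)
  then have "real (card (good_cells f N)) * (2*pi / real N) = (\<Sum>i\<in>good_cells f N. measure lborel (I i))"
    by simp
  also have "\<dots> = measure lborel (\<Union>i\<in>good_cells f N. I i)"
    by (rule measure_UNION'[symmetric]) (use fm disj in auto)
  also have "\<dots> \<le> measure lborel (band f)"
  proof (rule measure_mono_fmeasurable[OF sub])
    show "(\<Union>i\<in>good_cells f N. I i) \<in> sets lborel"
      using fm unfolding fmeasurable_def by (intro sets.finite_UN) auto
    have "{0..2*pi} \<in> fmeasurable lborel" using fmeasurable_cbox[of 0 "2*pi"] by simp
    then show "band f \<in> fmeasurable lborel"
      by (rule fmeasurableI2) (use band_borel[OF assms(1)] in \<open>auto simp: band_def\<close>)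
  qed
  finally show ?thesis .
qed

section \<open>Convergence\<close>

lemma arc_root_count_P2n_le:
  assumes "k < n" "real n \<ge> 2 * (coeff_moment k a 1 + coeff_moment k a 2) + 1"
    and "0 \<le> \<alpha>" "\<alpha> \<le> \<beta>" "\<beta> \<le> 2*pi"
    and "\<forall>t\<in>{\<alpha>..<\<beta>}. order (cis t) (P2n k a n) \<le> m"
  shows "real (arc_root_count (P2n k a n) {\<alpha>..<\<beta>}) \<le> real m * (real n * (\<beta> - \<alpha>) / pi + 3)"
proof -
  define Z where "Z = {t\<in>{\<alpha>..<\<beta>}. poly (P2n k a n) (cis t) = 0}"
  have Z_eq: "Z = {t\<in>{\<alpha>..<\<beta>}. cos (real n * t) = f2 k a t}"
    unfolding Z_def using assms(1) by (simp add: poly_P2n_cis_eq_0_iff)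
  have "finite Z" unfolding Z_def using assms P2n_nonzero by (intro finite_arc_roots) auto
  then have "real (card Z) \<le> real n * (\<beta> - \<alpha>) / pi + 3"
    using abs_f2'_le abs_f2''_le assms(2,4) unfolding Z_eq
    by (intro card_solutions_cos_eq_le[OF has_real_derivative_f2 has_real_derivative_f2']) auto
  moreover have "arc_root_count (P2n k a n) {\<alpha>..<\<beta>} \<le> m * card Z"
    unfolding Z_def by (rule arc_root_count_le_card) (use assms(6) in auto)
  ultimately show ?thesis
    by (smt (verit) mult_left_mono of_nat_0_le_iff of_nat_le_iff of_nat_mult)
qed

lemma arc_root_count_P2n_ge:
  assumes "k < n" "0 \<le> \<alpha>" "\<alpha> \<le> \<beta>" "\<beta> \<le> 2*pi" "\<forall>t\<in>{\<alpha>..\<beta>}. \<bar>f2 k a t\<bar> < 1"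
  shows "real n * (\<beta> - \<alpha>) / pi - 2 \<le> real (arc_root_count (P2n k a n) {\<alpha>..<\<beta>})"
proof -
  have Z_eq: "{t\<in>{\<alpha>..<\<beta>}. poly (P2n k a n) (cis t) = 0} = {t\<in>{\<alpha>..<\<beta>}. cos (real n * t) = f2 k a t}"
    using assms(1) by (simp add: poly_P2n_cis_eq_0_iff)
  have "finite {t\<in>{\<alpha>..<\<beta>}. poly (P2n k a n) (cis t) = 0}"
    using assms P2n_nonzero by (intro finite_arc_roots) auto
  then have "real n * (\<beta> - \<alpha>) / pi - 2 \<le> real (card {t\<in>{\<alpha>..<\<beta>}. poly (P2n k a n) (cis t) = 0})"
    unfolding Z_eq using assms(1,5) by (intro card_solutions_cos_eq_ge continuous_on_f2) auto
  also have "\<dots> \<le> real (arc_root_count (P2n k a n) {\<alpha>..<\<beta>})"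
    using card_le_arc_root_count[OF P2n_nonzero[OF assms(1), of a], of "{\<alpha>..<\<beta>}"] by linarith
  finally show ?thesis .
qed

lemma arc_root_count_P2n_eq_0:
  assumes "k \<le> n" "\<forall>t\<in>{\<alpha>..\<beta>}. \<bar>f2 k a t\<bar> > 1"
  shows "arc_root_count (P2n k a n) {\<alpha>..<\<beta>} = 0"
proof -
  have "cos (real n * t) \<noteq> f2 k a t" if "t \<in> {\<alpha>..<\<beta>}" for t
    using assms(2) that abs_cos_le_one[of "real n * t"] by force
  then have "{t\<in>{\<alpha>..<\<beta>}. poly (P2n k a n) (cis t) = 0} = {}"
    using assms(1) by (auto simp: poly_P2n_cis_eq_0_iff)
  then show ?thesis unfolding arc_root_count_def by (simp only: sum.empty)
qed

lemma arc_root_count_P2n_cell: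
  fixes k n N i :: nat and a :: "nat \<Rightarrow> int"
  defines "u \<equiv> real (arc_root_count (P2n k a n) {grid N i..<grid N (Suc i)})"
    and "c \<equiv> 2 * real n / real N"
  assumes n: "k < n" "real n \<ge> 2 * (coeff_moment k a 1 + coeff_moment k a 2) + 1" and i: "i < N"
  shows "u \<le> 2 * (c + 3)"
    and "\<forall>t\<in>cell N i. \<bar>f2 k a t\<bar> < 1 \<Longrightarrow> c - 2 \<le> u"
    and "0 < \<eta> \<Longrightarrow> \<eta> \<le> 1/2 \<Longrightarrow> real n * \<eta> > coeff_moment k a 1 \<Longrightarrow>
      \<forall>t\<in>cell N i. \<bar>f2 k a t\<bar> \<le> 1 - \<eta> \<Longrightarrow> u \<le> c + 3"
    and "\<forall>t\<in>cell N i. \<bar>f2 k a t\<bar> > 1 \<Longrightarrow> u = 0"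
proof -
  have cell: "0 \<le> grid N i" "grid N i \<le> grid N (Suc i)" "grid N (Suc i) \<le> 2*pi"
    "real n * (grid N (Suc i) - grid N i) / pi = c"
    using i grid_nonneg grid_mono[of i "Suc i" N] grid_le_2pi[of "Suc i" N]
    by (auto simp: grid_Suc_diff c_def)
  have "\<forall>t\<in>{grid N i..<grid N (Suc i)}. order (cis t) (P2n k a n) \<le> 2"
    using order_P2n_cis_le_2[OF n] by blast
  from arc_root_count_P2n_le[OF n cell(1-3) this]
  show "u \<le> 2 * (c + 3)" using cell(4) by (simp add: u_def)
  show "c - 2 \<le> u" if "\<forall>t\<in>cell N i. \<bar>f2 k a t\<bar> < 1"
    using arc_root_count_P2n_ge[OF n(1) cell(1-3)] that cell(4) by (simp add: u_def cell_def)
  show "u \<le> c + 3" if \<eta>: "0 < \<eta>" "\<eta> \<le> 1/2" "real n * \<eta> > coeff_moment k a 1"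
    "\<forall>t\<in>cell N i. \<bar>f2 k a t\<bar> \<le> 1 - \<eta>"
  proof -
    have "\<forall>t\<in>{grid N i..<grid N (Suc i)}. order (cis t) (P2n k a n) \<le> 1"
      using order_P2n_cis_le_1[OF n(1) \<eta>(1-3)] \<eta>(4) by (auto simp: cell_def)
    from arc_root_count_P2n_le[OF n cell(1-3) this]
    show ?thesis using cell(4) by (simp add: u_def)
  qed
  show "u = 0" if "\<forall>t\<in>cell N i. \<bar>f2 k a t\<bar> > 1"
    using that arc_root_count_P2n_eq_0[of k n] n(1) by (simp add: u_def cell_def)
qed

lemma zeros_on_P2n_bounds:
  fixes k n N :: nat and a :: "nat \<Rightarrow> int"
  defines "G \<equiv> real (card (good_cells (f2 k a) N))" and "X \<equiv> real (card (mixed_cells (f2 k a) N))"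
    and "c \<equiv> 2 * real n / real N"
  assumes n: "k < n" "real n \<ge> 2 * (coeff_moment k a 1 + coeff_moment k a 2) + 1"
    and N: "N \<ge> 1"
    and \<eta>: "0 < \<eta>" "\<eta> \<le> 1/2" "real n * \<eta> > coeff_moment k a 1"
      "\<And>i t. i \<in> good_cells (f2 k a) N \<Longrightarrow> t \<in> cell N i \<Longrightarrow> \<bar>f2 k a t\<bar> \<le> 1 - \<eta>"
  shows "G * (c - 2) \<le> real (zeros_on (P2n k a n))"
    and "real (zeros_on (P2n k a n)) \<le> G * (c + 3) + X * (2 * (c + 3))"
proof -
  define u where "u i = real (arc_root_count (P2n k a n) {grid N i..<grid N (Suc i)})" for i
  note cell_bounds = arc_root_count_P2n_cell[OF n]
  have "real (zeros_on (P2n k a n)) = (\<Sum>i<N. u i)"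
    unfolding u_def zeros_on_eq_arc_root_count[OF P2n_nonzero[OF n(1)]]
      arc_root_count_grid[OF P2n_nonzero[OF n(1)] N] by simp
  also have "\<dots> = (\<Sum>i\<in>good_cells (f2 k a) N. u i) + (\<Sum>i\<in>mixed_cells (f2 k a) N. u i)
      + (\<Sum>i\<in>bad_cells (f2 k a) N. u i)"
    using cells_partition[where f="f2 k a" and N=N] by (simp add: sum.union_disjoint)
  finally have U: "real (zeros_on (P2n k a n)) = \<dots>" .
  have "(\<Sum>i\<in>bad_cells (f2 k a) N. u i) = 0"
    by (intro sum.neutral) (simp add: bad_cells_def u_def cell_bounds(4))
  moreover have "G * (c - 2) \<le> (\<Sum>i\<in>good_cells (f2 k a) N. u i)"
    unfolding G_def by (rule sum_bounded_below) (use cell_bounds(2) in \<open>auto simp: good_cells_def u_def c_def\<close>)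
  moreover have "(\<Sum>i\<in>good_cells (f2 k a) N. u i) \<le> G * (c + 3)"
    unfolding G_def by (rule sum_bounded_above)
      (use cell_bounds(3)[OF _ \<eta>(1-3)] \<eta>(4) in \<open>auto simp: good_cells_def u_def c_def\<close>)
  moreover have "(\<Sum>i\<in>mixed_cells (f2 k a) N. u i) \<le> X * (2 * (c + 3))"
    unfolding X_def by (rule sum_bounded_above) (use cell_bounds(1) in \<open>auto simp: mixed_cells_def u_def c_def\<close>)
  moreover have "0 \<le> (\<Sum>i\<in>mixed_cells (f2 k a) N. u i)" by (simp add: u_def sum_nonneg)
  ultimately show "G * (c - 2) \<le> real (zeros_on (P2n k a n))"
    and "real (zeros_on (P2n k a n)) \<le> G * (c + 3) + X * (2 * (c + 3))"
    unfolding U by linarith+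
qed

lemma density_error_bound:
  fixes G X U \<mu> \<Lambda> :: real and n N :: nat
  assumes "0 < n" "0 < N" "0 \<le> G" "G \<le> real N" "0 \<le> X" "X \<le> 2 * \<Lambda>"
    and "G / real N \<le> \<mu>" "\<mu> \<le> (G + X) / real N"
    and "G * (2 * real n / real N - 2) \<le> U" "U \<le> G * (2 * real n / real N + 3) + X * (2 * (2 * real n / real N + 3))"
  shows "\<bar>U / (2 * real n) - \<mu>\<bar> \<le> 4 * \<Lambda> / real N + (2 * real N + 6 * \<Lambda>) / real n"
proof -
  have n: "0 < real n" "0 < real N" using assms(1,2) by simp_all
  have "G / real N - G / real n = G * (2 * real n / real N - 2) / (2 * real n)"
    using n by (simp add: field_simps)
  also have "\<dots> \<le> U / (2 * real n)" using assms(9) n by (intro divide_right_mono) auto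
  finally have "G / real N - G / real n \<le> U / (2 * real n)" .
  moreover have "U / (2 * real n)
      \<le> (G * (2 * real n / real N + 3) + X * (2 * (2 * real n / real N + 3))) / (2 * real n)"
    using assms(10) n by (intro divide_right_mono) auto
  moreover have "\<dots> = G / real N + 3/2 * (G / real n) + 2 * (X / real N) + 3 * (X / real n)"
    using n by (simp add: field_simps)
  moreover have "G / real n \<le> real N / real n" "X / real n \<le> 2 * (\<Lambda> / real n)"
    "X / real N \<le> 2 * (\<Lambda> / real N)" "\<mu> \<le> G / real N + X / real N"
    using assms(3-6,8) n by (simp_all add: divide_right_mono add_divide_distrib)
  moreover have "(2 * real N + 6 * \<Lambda>) / real n = 2 * (real N / real n) + 6 * (\<Lambda> / real n)"
    "4 * \<Lambda> / real N = 4 * (\<Lambda> / real N)"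
    by (simp_all add: add_divide_distrib)
  moreover have "0 \<le> \<Lambda> / real n" "0 \<le> \<Lambda> / real N" "0 \<le> real N / real n"
    using assms(5,6) n by simp_all
  ultimately show ?thesis unfolding abs_le_iff using assms(7) by (intro conjI; linarith)
qed

lemma zeros_on_P2n_density_approx:
  fixes k N :: nat and a :: "nat \<Rightarrow> int"
  defines "\<mu> \<equiv> measure lborel (band (f2 k a)) / (2*pi)"
    and "\<Lambda> \<equiv> real (card {u\<in>{0..2*pi}. \<bar>f2 k a u\<bar> = 1})"
  assumes nondeg: "\<exists>j\<in>{1..k}. a j \<noteq> 0" and N: "N \<ge> 1"
  shows "\<forall>\<^sub>F n in sequentially. \<bar>real (zeros_on (P2n k a n)) / (2 * real n) - \<mu>\<bar>
           \<le> 4 * \<Lambda> / real N + (2 * real N + 6 * \<Lambda>) / real n"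
proof -
  define M where "M = 2 * (coeff_moment k a 1 + coeff_moment k a 2) + 1"
  obtain \<eta> where \<eta>: "0 < \<eta>" "\<eta> \<le> 1/2"
    "\<And>i t. i \<in> good_cells (f2 k a) N \<Longrightarrow> t \<in> cell N i \<Longrightarrow> \<bar>f2 k a t\<bar> \<le> 1 - \<eta>"
    using margin_on_good_cells[OF continuous_on_f2] by blast
  define G X where "G = real (card (good_cells (f2 k a) N))" and "X = real (card (mixed_cells (f2 k a) N))"
  have G: "0 \<le> G" "G \<le> real N" using card_good_cells_le[of "f2 k a" N] by (simp_all add: G_def)
  have X: "0 \<le> X" "X \<le> 2 * \<Lambda>"
    using card_mixed_cells_le[OF continuous_on_f2 N finite_unit_level_set_f2[OF nondeg]]
    by (simp_all add: X_def \<Lambda>_def)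
  have \<mu>: "G / real N \<le> \<mu>" "\<mu> \<le> (G + X) / real N"
    using measure_band_ge[OF continuous_on_f2 N, of k a] measure_band_le[OF continuous_on_f2 N, of k a]
    unfolding \<mu>_def G_def X_def by (simp_all add: field_simps)
  have "\<forall>\<^sub>F n in sequentially. k < n \<and> M \<le> real n \<and> coeff_moment k a 1 / \<eta> < real n"
    using eventually_gt_at_top[of k] filterlim_real_sequentially
      [THEN filterlim_at_top_dense[THEN iffD1], rule_format, of M]
      filterlim_real_sequentially[THEN filterlim_at_top_dense[THEN iffD1], rule_format,
        of "coeff_moment k a 1 / \<eta>"]
    by eventually_elim auto
  then show ?thesis
  proof (rule eventually_mono)
    fix n assume n: "k < n \<and> M \<le> real n \<and> coeff_moment k a 1 / \<eta> < real n"
    then have "coeff_moment k a 1 < real n * \<eta>" using \<eta>(1) by (simp add: field_simps)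
    then have "G * (2 * real n / real N - 2) \<le> real (zeros_on (P2n k a n))"
      "real (zeros_on (P2n k a n)) \<le> G * (2 * real n / real N + 3) + X * (2 * (2 * real n / real N + 3))"
      using zeros_on_P2n_bounds[of k n a N \<eta>] n N \<eta> unfolding G_def X_def M_def by auto
    then show "\<bar>real (zeros_on (P2n k a n)) / (2 * real n) - \<mu>\<bar>
        \<le> 4 * \<Lambda> / real N + (2 * real N + 6 * \<Lambda>) / real n"
      using n N G X \<mu> by (intro density_error_bound) auto
  qed
qed

lemma zeros_on_P2n_density_tendsto:
  assumes "\<exists>j\<in>{1..k}. a j \<noteq> 0"
  shows "(\<lambda>n. real (zeros_on (P2n k a n)) / (2 * real n)) \<longlonglongrightarrow> measure lborel (band (f2 k a)) / (2*pi)"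
proof (rule tendstoI)
  fix e :: real assume e: "0 < e"
  define \<Lambda> where "\<Lambda> = real (card {u\<in>{0..2*pi}. \<bar>f2 k a u\<bar> = 1})"
  define N where "N = nat \<lceil>8 * \<Lambda> / e\<rceil> + 1"
  have N: "N \<ge> 1" "8 * \<Lambda> / e \<le> real N" unfolding N_def by linarith+
  then have small: "4 * \<Lambda> / real N \<le> e / 2" using e by (simp add: field_simps \<Lambda>_def)
  have "\<forall>\<^sub>F n in sequentially. (2 * real N + 6 * \<Lambda>) / real n < e / 2"
    using e by (intro order_tendstoD(2)[OF lim_const_over_n]) simp
  with zeros_on_P2n_density_approx[OF assms N(1)]
  show "\<forall>\<^sub>F n in sequentially.
      dist (real (zeros_on (P2n k a n)) / (2 * real n)) (measure lborel (band (f2 k a)) / (2*pi)) < e"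
    unfolding \<Lambda>_def dist_real_def by eventually_elim (use small[unfolded \<Lambda>_def] in linarith)
qed

lemma measure_unit_superlevel_set:
  assumes "continuous_on UNIV f"
  shows "measure lebesgue {t\<in>{0..2*pi}. \<bar>f t\<bar> \<ge> 1} = 2*pi - measure lborel (band f)"
proof -
  have eq: "{t\<in>{0..2*pi}. \<bar>f t\<bar> \<ge> 1} = {0..2*pi} - band f" by (auto simp: band_def)
  have "band f \<in> sets lborel" "band f \<subseteq> {0..2*pi}" using band_borel[OF assms] by (auto simp: band_def)
  then have "measure lborel ({0..2*pi} - band f) = measure lborel {0..2*pi} - measure lborel (band f)"
    by (intro measure_Diff) auto
  moreover have "{0..2*pi} - band f \<in> sets lborel" using \<open>band f \<in> sets lborel\<close> by auto
  ultimately show ?thesis unfolding eq by (simp add: measure_completion)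
qed

theorem mainTheorem2:
  fixes k :: nat and a :: "nat \<Rightarrow> int"
  assumes "k > 0" and "\<exists>j\<in>{1..k}. a j \<noteq> 0"
  shows "(\<lambda>n. Cratio n (P2n k a n)) \<longlonglongrightarrow>
           measure lebesgue {t \<in> {0..2*pi}. \<bar>f2 k a t\<bar> \<ge> 1} / (2*pi)"
proof -
  have "(\<lambda>n. 1 - real (zeros_on (P2n k a n)) / (2 * real n))
      \<longlonglongrightarrow> 1 - measure lborel (band (f2 k a)) / (2*pi)"
    by (intro tendsto_diff tendsto_const zeros_on_P2n_density_tendsto[OF assms(2)])
  moreover have "\<forall>\<^sub>F n in sequentially. 1 - real (zeros_on (P2n k a n)) / (2 * real n) = Cratio n (P2n k a n)"
    using eventually_gt_at_top[of k] by eventually_elim (simp add: Cratio_P2n)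
  ultimately have "(\<lambda>n. Cratio n (P2n k a n)) \<longlonglongrightarrow> 1 - measure lborel (band (f2 k a)) / (2*pi)"
    by (rule Lim_transform_eventually)
  moreover have "1 - measure lborel (band (f2 k a)) / (2*pi)
      = measure lebesgue {t \<in> {0..2*pi}. \<bar>f2 k a t\<bar> \<ge> 1} / (2*pi)"
    unfolding measure_unit_superlevel_set[OF continuous_on_f2] by (simp add: diff_divide_distrib)
  ultimately show ?thesis by simp
qed

end
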